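(* Let $l$ be a prime, $n\ge 2$, and $\mathcal{G}_n=\langle\alpha_1,\dots,\alpha_n\rangle\le S_{l^n}$ with $\alpha_r$ the product of the $l$-cycles $(j,\ j+l^{r-1},\dots,\ j+(l-1)l^{r-1})$, $j=1,\dots,l^{r-1}$. Let $\beta_i=((i-1)l+1,\ (i-1)l+2,\dots,\ il)$ for $1\le i\le l^{n-1}$. Then every $l$-cycle in $\mathcal{G}_n$ is of the form $\beta_i^j$ for some $i$ and $j$, and the conjugacy class of $\alpha_1=\beta_1$ in $\mathcal{G}_n$ is exactly $\{\beta_1,\dots,\beta_{l^{n-1}}\}$; in particular it has $l^{n-1}$ elements. *)

theory Defs
  imports "HOL-Algebra.Sym_Groups" "HOL-Algebra.Generated_Groups" "HOL-Combinatorics.Cycles" "HOL-Computational_Algebra.Primes"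
begin

definition alpha :: "nat \<Rightarrow> nat \<Rightarrow> (nat \<Rightarrow> nat)" where
  "alpha l r = foldr (\<lambda>j f. cycle_of_list (map (\<lambda>k. j + k * l^(r-1)) [0..<l]) \<circ> f)
                      [1..<l^(r-1)+1] id"

definition beta :: "nat \<Rightarrow> nat \<Rightarrow> (nat \<Rightarrow> nat)" where
  "beta l i = cycle_of_list [(i-1)*l+1..<i*l+1]"

definition Gn :: "nat \<Rightarrow> nat \<Rightarrow> (nat \<Rightarrow> nat) set" where
  "Gn l n = generate (sym_group (l^n)) (alpha l ` {1..n})"

definition is_cycle_of_length :: "nat \<Rightarrow> (nat \<Rightarrow> nat) \<Rightarrow> bool" where
  "is_cycle_of_length m \<sigma> \<longleftrightarrow> (\<exists>cs. distinct cs \<and> length cs = m \<and> \<sigma> = cycle_of_list cs)"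

definition conj_class_in :: "('a, 'b) monoid_scheme \<Rightarrow> 'a set \<Rightarrow> 'a \<Rightarrow> 'a set" where
  "conj_class_in G H x = {g \<otimes>\<^bsub>G\<^esub> x \<otimes>\<^bsub>G\<^esub> inv\<^bsub>G\<^esub> g | g. g \<in> H}"

end

theory Submission
  imports Defs
begin

(* Cut {1..l^n} into the l^(n-1) consecutive blocks B_b = {b*l+1, ..., b*l+l},
   so that beta l (b+1) is the rotation of B_b.  Writing a point as a + c*l^(r-1) + 1 with
   a < l^(r-1) and c < l, the generator alpha l r adds 1 to the digit c modulo l.  Hence
   alpha l 1 rotates B_0, while for r >= 2 alpha l r permutes the blocks as wholes.  So every
   element of G_n "rotates blocks": it maps each block onto a block by a cyclic shift, and
   this property is closed under composition, which covers all of G_n.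
   (1) An l-cycle that rotates blocks moves either all or none of the points of a block; its
       support has l points, so it is exactly one block, on which it acts as a shift:
       the cycle is a power of the corresponding beta.
   (2) If g rotates blocks then g o beta l 1 o g^-1 is the rotation of the block containing
       g 1; since G_n acts transitively on {1..l^n}, every block arises this way.
   (3) The betas are pairwise distinct, which gives the cardinality l^(n-1). *)

lemma mixed_radix_bound:
  fixes a c L l :: nat
  assumes "a < L" "c < l"
  shows "a + c * L < l * L"
proof -
  have "a + c * L < (c + 1) * L" using assms(1) by simp
  also have "\<dots> \<le> l * L" using assms(2) by (intro mult_right_mono) auto
  finally show ?thesis .
qed

lemma pow_pred_split: "1 \<le> r \<Longrightarrow> (l::nat) ^ r = l * l ^ (r - 1)"
  by (cases r) auto

lemma block_point_eq:
  fixes b b' d e l :: nat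
  assumes "d < l" "e < l"
  shows "b * l + d + 1 = b' * l + e + 1 \<longleftrightarrow> b = b' \<and> d = e"
proof
  assume eq: "b * l + d + 1 = b' * l + e + 1"
  have "(b * l + d) div l = (b' * l + e) div l" "(b * l + d) mod l = (b' * l + e) mod l"
    using eq by simp_all
  then show "b = b' \<and> d = e" using assms by simp
qed simp

lemma mod_shift_eq_iff:
  fixes e t l :: nat
  assumes "e < l"
  shows "(e + t) mod l = e \<longleftrightarrow> t mod l = 0"
proof -
  have "(e + t) mod l = e \<longleftrightarrow> (e + t) mod l = e mod l" using assms by simp
  also have "\<dots> \<longleftrightarrow> l dvd t" by (simp add: mod_eq_dvd_iff_nat)
  finally show ?thesis by (simp add: dvd_eq_mod_eq_0)
qed

lemma cycle_of_list_nth: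
  assumes "distinct cs" "i < length cs"
  shows "cycle_of_list cs (cs ! i) = cs ! (Suc i mod length cs)"
proof -
  have "map (cycle_of_list cs) cs = rotate 1 cs"
    using cyclic_rotation[OF assms(1), of 1] by simp
  then have "cycle_of_list cs (cs ! i) = rotate 1 cs ! i" using assms(2) by (metis nth_map)
  then show ?thesis using assms(2) by (simp add: nth_rotate1)
qed

lemma cycle_of_list_moves:
  assumes "distinct cs" "2 \<le> length cs" "y \<in> set cs"
  shows "cycle_of_list cs y \<noteq> y"
proof -
  obtain i where i: "i < length cs" "y = cs ! i" using assms(3) by (auto simp: in_set_conv_nth)
  have "Suc i mod length cs \<noteq> i"
    using i(1) assms(2) by (cases "Suc i = length cs") auto
  moreover have "Suc i mod length cs < length cs" using assms(2) by (intro mod_less_divisor) linarith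
  ultimately show ?thesis
    using cycle_of_list_nth[OF assms(1) i(1)] i assms(1) by (simp add: nth_eq_iff_index_eq)
qed

definition cycles_product :: "('i \<Rightarrow> 'a list) \<Rightarrow> 'i list \<Rightarrow> 'a \<Rightarrow> 'a" where
  "cycles_product cs js = foldr (\<lambda>j f. cycle_of_list (cs j) \<circ> f) js id"

lemma cycles_product_Cons:
  "cycles_product cs (j # js) = cycle_of_list (cs j) \<circ> cycles_product cs js"
  by (simp add: cycles_product_def)

lemma cycles_product_outside:
  assumes "\<forall>j\<in>set js. x \<notin> set (cs j)"
  shows "cycles_product cs js x = x"
  using assms
  by (induct js) (simp_all add: cycles_product_def id_outside_supp)

lemma cycles_product_inside:
  assumes "distinct js"
    and "\<forall>j\<in>set js. \<forall>j'\<in>set js. j \<noteq> j' \<longrightarrow> set (cs j) \<inter> set (cs j') = {}"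
    and "j \<in> set js" "x \<in> set (cs j)"
  shows "cycles_product cs js x = cycle_of_list (cs j) x"
  using assms
proof (induct js)
  case Nil then show ?case by simp
next
  case (Cons j0 js)
  show ?case
  proof (cases "j0 = j")
    case True
    then have "cycles_product cs js x = x"
      using Cons.prems by (intro cycles_product_outside) auto
    then show ?thesis using True by (simp add: cycles_product_Cons)
  next
    case False
    then have IH: "cycles_product cs js x = cycle_of_list (cs j) x"
      using Cons.prems by (intro Cons.hyps) auto
    have "cycle_of_list (cs j) x \<in> set (cs j)"
      using Cons.prems(4) cycle_permutes[of "cs j"] by (simp add: permutes_in_image)
    then have "cycle_of_list (cs j) x \<notin> set (cs j0)" using Cons.prems False by auto
    then show ?thesis using IH by (simp add: cycles_product_Cons id_outside_supp)
  qed
qed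

lemma cycles_product_permutes:
  assumes "\<forall>j\<in>set js. set (cs j) \<subseteq> S"
  shows "cycles_product cs js permutes S"
  using assms
proof (induct js)
  case Nil then show ?case by (simp add: cycles_product_def permutes_def)
next
  case (Cons j js)
  have "set (cs j) \<subseteq> S" using Cons.prems by simp
  then have "cycle_of_list (cs j) permutes S" by (rule permutes_subset[OF cycle_permutes])
  moreover have "cycles_product cs js permutes S" using Cons by simp
  ultimately show ?case unfolding cycles_product_Cons by (rule permutes_compose[rotated])
qed

section \<open>The generators alpha as digit rotations\<close>

definition alpha_cycle :: "nat \<Rightarrow> nat \<Rightarrow> nat \<Rightarrow> nat list" where
  "alpha_cycle l r j = map (\<lambda>k. j + k * l^(r-1)) [0..<l]"

lemma alpha_as_cycles_product: "alpha l r = cycles_product (alpha_cycle l r) [1..<l^(r-1)+1]"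
  by (simp only: alpha_def cycles_product_def alpha_cycle_def)

lemma alpha_cycle_range:
  assumes "j \<in> set [1..<l^(r-1)+1]"
  shows "set (alpha_cycle l r j) \<subseteq> {1..l * l^(r-1)}"
proof
  fix x assume "x \<in> set (alpha_cycle l r j)"
  then obtain k where k: "k < l" "x = (j - 1) + k * l^(r-1) + 1"
    using assms by (auto simp: alpha_cycle_def)
  have "j - 1 < l^(r-1)" using assms by auto
  then have "(j - 1) + k * l^(r-1) < l * l^(r-1)" using k(1) by (rule mixed_radix_bound)
  then show "x \<in> {1..l * l^(r-1)}" using k(2) by simp
qed

lemma alpha_cycles_disjoint:
  "\<forall>j\<in>set [1..<l^(r-1)+1]. \<forall>j'\<in>set [1..<l^(r-1)+1].
     j \<noteq> j' \<longrightarrow> set (alpha_cycle l r j) \<inter> set (alpha_cycle l r j') = {}"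
proof (intro ballI impI)
  fix j j' assume j: "j \<in> set [1..<l^(r-1)+1]" "j' \<in> set [1..<l^(r-1)+1]" "j \<noteq> j'"
  show "set (alpha_cycle l r j) \<inter> set (alpha_cycle l r j') = {}"
  proof (rule ccontr)
    assume "set (alpha_cycle l r j) \<inter> set (alpha_cycle l r j') \<noteq> {}"
    then obtain k k' where "j + k * l^(r-1) = j' + k' * l^(r-1)"
      by (auto simp: alpha_cycle_def)
    then have "j - 1 + k * l^(r-1) = j' - 1 + k' * l^(r-1)" using j by auto
    then have "(j - 1 + k * l^(r-1)) mod l^(r-1) = (j' - 1 + k' * l^(r-1)) mod l^(r-1)"
      by (rule arg_cong)
    then show False using j by auto
  qed
qed

lemma alpha_digit:
  assumes "l \<ge> 2" "a < l^(r-1)" "c < l"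
  shows "alpha l r (a + c * l^(r-1) + 1) = a + ((c + 1) mod l) * l^(r-1) + 1"
proof -
  let ?L = "l^(r-1)" and ?cs = "alpha_cycle l r (a + 1)"
  have j: "a + 1 \<in> set [1..<?L+1]" using assms(2) by (simp, linarith)
  have point: "a + c * ?L + 1 = ?cs ! c" using assms(3) by (simp add: alpha_cycle_def)
  have distinct: "distinct ?cs" using assms(1)
    by (auto simp: alpha_cycle_def distinct_map inj_on_def)
  have "?cs ! c \<in> set ?cs" by (rule nth_mem) (simp add: alpha_cycle_def assms(3))
  then have "alpha l r (a + c * ?L + 1) = cycle_of_list ?cs (?cs ! c)"
    unfolding alpha_as_cycles_product point
    by (intro cycles_product_inside[OF _ alpha_cycles_disjoint j]) simp_all
  also have "\<dots> = ?cs ! (Suc c mod l)"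
    using cycle_of_list_nth[OF distinct, of c] assms(3) by (simp add: alpha_cycle_def)
  also have "\<dots> = a + ((c + 1) mod l) * ?L + 1" using assms(1) by (simp add: alpha_cycle_def)
  finally show ?thesis .
qed

lemma alpha_fixes:
  assumes "r \<ge> 1" "\<not> (1 \<le> p \<and> p \<le> l^r)"
  shows "alpha l r p = p"
proof -
  have "p \<notin> set (alpha_cycle l r j)" if "j \<in> set [1..<l^(r-1)+1]" for j
    using alpha_cycle_range[OF that] assms(2) pow_pred_split[OF assms(1)] by auto
  then show ?thesis unfolding alpha_as_cycles_product by (intro cycles_product_outside) simp
qed

lemma alpha_permutes:
  assumes "1 \<le> r" "r \<le> n" "l \<ge> 2"
  shows "alpha l r permutes {1..l^n}"
proof -
  have "l^r \<le> l^n" using assms by (intro power_increasing) simp_all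
  then have "l * l^(r-1) \<le> l^n" using pow_pred_split[OF assms(1), of l] by simp
  then have "set (alpha_cycle l r j) \<subseteq> {1..l^n}" if "j \<in> set [1..<l^(r-1)+1]" for j
    using alpha_cycle_range[OF that] by auto
  then show ?thesis
    unfolding alpha_as_cycles_product by (intro cycles_product_permutes) simp
qed

lemma alpha_pow_digit:
  assumes "l \<ge> 2" "a < l^(r-1)" "c < l"
  shows "(alpha l r ^^ k) (a + c * l^(r-1) + 1) = a + ((c + k) mod l) * l^(r-1) + 1"
proof (induct k)
  case 0 then show ?case using assms(3) by simp
next
  case (Suc k)
  have "(c + k) mod l < l" using assms(1) by simp
  then show ?case
    using Suc alpha_digit[OF assms(1,2)] by (simp add: mod_Suc_eq)
qed

text \<open>alpha l r has order dividing l, so its inverse is a power of it; this is needed because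
  the generated subgroup G_n is closed under inverses.\<close>
lemma alpha_pow_order:
  assumes "l \<ge> 2" "r \<ge> 1"
  shows "alpha l r ^^ l = id"
proof
  fix p
  show "(alpha l r ^^ l) p = id p"
  proof (cases "1 \<le> p \<and> p \<le> l^r")
    case True
    let ?L = "l^(r-1)"
    define a c where "a = (p - 1) mod ?L" and "c = (p - 1) div ?L"
    have L: "?L > 0" "p - 1 < l * ?L" using True assms pow_pred_split[OF assms(2)] by auto
    have a: "a < ?L" unfolding a_def using L(1) by simp
    have c: "c < l" unfolding c_def using L(2) by (simp add: less_mult_imp_div_less mult.commute)
    have p: "p = a + c * ?L + 1" unfolding a_def c_def using True mod_div_mult_eq[of "p - 1" ?L] by simp
    have "(alpha l r ^^ l) p = a + ((c + l) mod l) * ?L + 1"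
      unfolding p by (rule alpha_pow_digit[OF assms(1) a c])
    also have "\<dots> = p" using c p by simp
    finally show ?thesis by simp
  next
    case False
    have "(alpha l r ^^ k) p = p" for k by (induct k) (simp_all add: alpha_fixes[OF assms(2) False])
    then show ?thesis by simp
  qed
qed

lemma alpha_inv:
  assumes "l \<ge> 2" "r \<ge> 1"
  shows "Hilbert_Choice.inv (alpha l r) = alpha l r ^^ (l - 1)"
proof (rule inv_unique_comp)
  have l: "Suc (l - 1) = l" using assms(1) by simp
  show "alpha l r \<circ> alpha l r ^^ (l - 1) = id"
    using alpha_pow_order[OF assms] funpow.simps(2)[of "l - 1" "alpha l r"] l by simp
  show "alpha l r ^^ (l - 1) \<circ> alpha l r = id"
    using alpha_pow_order[OF assms] funpow_Suc_right[of "l - 1" "alpha l r"] l by simp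
qed

section \<open>Blocks and the cycles beta\<close>

definition block :: "nat \<Rightarrow> nat \<Rightarrow> nat list" where
  "block l b = [b*l+1..<b*l+l+1]"

lemma length_block [simp]: "length (block l b) = l"
  by (simp add: block_def)

lemma distinct_block: "distinct (block l b)"
  by (simp add: block_def)

lemma block_nth: "d < l \<Longrightarrow> block l b ! d = b*l + d + 1"
  unfolding block_def by (subst nth_upt) auto

lemma in_block: "y \<in> set (block l b) \<longleftrightarrow> (\<exists>d<l. y = b*l + d + 1)"
  by (auto simp: block_def intro: exI[of _ "y - b*l - 1"])

lemma card_block: "card (set (block l b)) = l"
  using distinct_card[OF distinct_block] by simp

lemma beta_block: "beta l (b + 1) = cycle_of_list (block l b)"
  by (simp add: beta_def block_def algebra_simps)

lemma alpha_1: "alpha l 1 = beta l 1"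
proof -
  have "alpha_cycle l 1 1 = block l 0"
    by (simp add: alpha_cycle_def block_def map_Suc_upt[symmetric] del: upt_Suc)
  then show ?thesis
    using beta_block[of l 0] by (simp add: alpha_as_cycles_product cycles_product_Cons)
       (simp add: cycles_product_def)
qed

lemma beta_pow_block:
  assumes "d < l"
  shows "(beta l (b + 1) ^^ j) (b*l + d + 1) = b*l + (d + j) mod l + 1"
proof -
  have "(beta l (b + 1) ^^ j) (block l b ! d) = rotate j (block l b) ! d"
    using cyclic_rotation[OF distinct_block, of j l b] assms
    by (metis beta_block length_block nth_map)
  then show ?thesis
    using assms by (simp add: nth_rotate block_nth add.commute)
qed

lemma beta_pow_outside:
  assumes "x \<notin> set (block l b)"
  shows "(beta l (b + 1) ^^ j) x = x"
  unfolding beta_block by (induct j) (simp_all add: id_outside_supp[OF assms])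

text \<open>Distinct blocks give distinct cycles: beta l i moves the first point of block i - 1.\<close>
lemma beta_inj: "inj_on (beta l) {1..}" if "l \<ge> 2"
proof
  fix i j :: nat assume ij: "i \<in> {1..}" "j \<in> {1..}" "beta l i = beta l j"
  obtain b c where bc: "i = b + 1" "j = c + 1"
    using ij(1,2) by (metis atLeast_iff le_add_diff_inverse2)
  have "(beta l (b + 1) ^^ 1) (b*l + 0 + 1) = b*l + (0 + 1) mod l + 1"
    using that by (intro beta_pow_block) simp
  then have "beta l (c + 1) (b*l + 0 + 1) \<noteq> b*l + 0 + 1" using ij(3) bc that by simp
  then have "b*l + 0 + 1 \<in> set (block l c)" using beta_pow_outside[of _ l c 1] by auto
  then show "i = j" using bc block_point_eq[of 0 l] that by (auto simp: in_block)
qed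

section \<open>Permutations rotating blocks\<close>

definition rotates_blocks :: "nat \<Rightarrow> (nat \<Rightarrow> nat) \<Rightarrow> bool" where
  "rotates_blocks l g \<longleftrightarrow> (\<forall>b. \<exists>b' t. \<forall>d<l. g (b*l + d + 1) = b'*l + (d + t) mod l + 1)"

lemma rotates_blocks_id: "rotates_blocks l id"
  unfolding rotates_blocks_def by (metis add_0_right id_apply mod_less)

lemma rotates_blocks_comp:
  assumes "l > 0" "rotates_blocks l g" "rotates_blocks l h"
  shows "rotates_blocks l (g \<circ> h)"
  unfolding rotates_blocks_def
proof
  fix b
  obtain b' t where h: "\<forall>d<l. h (b*l + d + 1) = b'*l + (d + t) mod l + 1"
    using assms(3) unfolding rotates_blocks_def by blast
  obtain b'' t' where g: "\<forall>d<l. g (b'*l + d + 1) = b''*l + (d + t') mod l + 1"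
    using assms(2) unfolding rotates_blocks_def by blast
  have "(g \<circ> h) (b*l + d + 1) = b''*l + (d + (t + t')) mod l + 1" if "d < l" for d
    using h g that assms(1) by (simp add: mod_add_left_eq add.assoc)
  then show "\<exists>b' t. \<forall>d<l. (g \<circ> h) (b*l + d + 1) = b'*l + (d + t) mod l + 1" by blast
qed

lemma rotates_blocks_pow: "l > 0 \<Longrightarrow> rotates_blocks l g \<Longrightarrow> rotates_blocks l (g ^^ k)"
  by (induct k) (simp_all add: rotates_blocks_id rotates_blocks_comp)

text \<open>alpha l 1 rotates block 0 and fixes the others; for r \<ge> 2, alpha l r moves
  whole blocks, since the digit it changes lies above the lowest one.\<close>
lemma rotates_blocks_alpha:
  assumes "l \<ge> 2" "r \<ge> 1"
  shows "rotates_blocks l (alpha l r)"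
  unfolding rotates_blocks_def
proof
  fix b
  show "\<exists>b' t. \<forall>d<l. alpha l r (b*l + d + 1) = b'*l + (d + t) mod l + 1"
  proof (cases "r = 1 \<and> b = 0")
    case True
    then have "alpha l r (b*l + d + 1) = 0*l + (d + 1) mod l + 1" if "d < l" for d
      using alpha_digit[OF assms(1), of 0 r d] that by simp
    then show ?thesis by blast
  next
    case rb: False
    show ?thesis
    proof (cases "r \<ge> 2 \<and> b < l^(r-1)")
      case True
      define M where "M = l^(r-2)"
      have "r - 1 \<ge> 1" "r - 1 - 1 = r - 2" using True by auto
      then have LM: "l^(r-1) = l * M" using pow_pred_split[of "r - 1" l] unfolding M_def by simp
      have M: "M > 0" unfolding M_def using assms(1) by simp
      define m q where "m = b mod M" and "q = b div M"
      have b: "b = m + q * M" unfolding m_def q_def by simp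
      have m: "m < M" unfolding m_def using M by simp
      have q: "q < l" using True LM unfolding q_def by (simp add: less_mult_imp_div_less)
      have "alpha l r (b*l + d + 1) = (m + ((q + 1) mod l) * M) * l + (d + 0) mod l + 1"
        if d: "d < l" for d
      proof -
        have low: "d + l * m < l^(r-1)"
          using mixed_radix_bound[OF d m] LM by (simp add: mult.commute)
        have "alpha l r (b*l + d + 1) = alpha l r ((d + l * m) + q * l^(r-1) + 1)"
          using b LM by (simp add: algebra_simps)
        also have "\<dots> = (d + l * m) + ((q + 1) mod l) * l^(r-1) + 1"
          by (rule alpha_digit[OF assms(1) low q])
        also have "\<dots> = (m + ((q + 1) mod l) * M) * l + (d + 0) mod l + 1"
          using LM d by (simp add: algebra_simps)
        finally show ?thesis .
      qed
      then show ?thesis by blast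
    next
      case False
      have "l^r \<le> b*l"
      proof (cases "r = 1")
        case True then show ?thesis using rb by simp
      next
        case False
        then have "l^(r-1) \<le> b" using \<open>\<not> (2 \<le> r \<and> b < l^(r-1))\<close> assms(2) by simp
        then show ?thesis using pow_pred_split[OF assms(2)] by (simp add: mult.commute)
      qed
      then have "alpha l r (b*l + d + 1) = b*l + (d + 0) mod l + 1" if "d < l" for d
        using alpha_fixes[OF assms(2)] that by fastforce
      then show ?thesis by blast
    qed
  qed
qed

lemma sym_group_pow: "x [^]\<^bsub>sym_group N\<^esub> (k::nat) = x ^^ k"
proof (induct k)
  case 0
  show ?case by (simp add: sym_group_one)
next
  case (Suc k)
  then have "x [^]\<^bsub>sym_group N\<^esub> Suc k = (x ^^ k) \<circ> x"
    by (simp add: nat_pow_def sym_group_def)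
  then show ?case by (simp only: funpow_Suc_right)
qed

lemma alpha_in_sym_group: "l \<ge> 2 \<Longrightarrow> alpha l ` {1..n} \<subseteq> carrier (sym_group (l^n))"
  using alpha_permutes sym_group_carrier by auto

lemma Gn_id: "id \<in> Gn l n"
  unfolding Gn_def using generate.one[of "sym_group (l^n)"] unfolding sym_group_one .

lemma Gn_subgroup: "l \<ge> 2 \<Longrightarrow> subgroup (Gn l n) (sym_group (l^n))"
  unfolding Gn_def by (rule group.generate_is_subgroup[OF sym_group_is_group alpha_in_sym_group])

lemma Gn_permutes: "l \<ge> 2 \<Longrightarrow> g \<in> Gn l n \<Longrightarrow> g permutes {1..l^n}"
  using subgroup.subset[OF Gn_subgroup] sym_group_carrier by blast

lemma Gn_comp: "l \<ge> 2 \<Longrightarrow> g \<in> Gn l n \<Longrightarrow> h \<in> Gn l n \<Longrightarrow> g \<circ> h \<in> Gn l n"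
  using subgroup.m_closed[OF Gn_subgroup] by (simp add: sym_group_mult)

lemma Gn_alpha_pow:
  assumes "l \<ge> 2" "r \<in> {1..n}"
  shows "alpha l r ^^ k \<in> Gn l n"
proof (induct k)
  case 0 show ?case unfolding funpow.simps(1) by (rule Gn_id)
next
  case (Suc k)
  have "alpha l r \<in> Gn l n" unfolding Gn_def using assms(2) by (intro generate.incl) auto
  then show ?case unfolding funpow.simps(2) using Gn_comp[OF assms(1)] Suc by blast
qed

text \<open>Every element of G_n rotates blocks: the property holds for the generators and their
  inverses (which are powers), and is closed under composition.\<close>
lemma Gn_rotates_blocks:
  assumes "l \<ge> 2" "g \<in> Gn l n"
  shows "rotates_blocks l g"
  using assms(2) unfolding Gn_def
proof (induct rule: generate.induct)
  case one
  show ?case unfolding sym_group_one by (rule rotates_blocks_id)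
next
  case (incl h)
  then show ?case using rotates_blocks_alpha[OF assms(1)] by auto
next
  case (inv h)
  then obtain r where r: "r \<in> {1..n}" "h = alpha l r" by auto
  then have "h \<in> carrier (sym_group (l^n))"
    using alpha_in_sym_group[OF assms(1), of n] by (auto simp: image_subset_iff)
  then have "inv\<^bsub>sym_group (l^n)\<^esub> h = Hilbert_Choice.inv (alpha l r)" using r by simp
  also have "\<dots> = alpha l r ^^ (l - 1)" using alpha_inv[OF assms(1)] r by simp
  finally show ?case
    using rotates_blocks_pow rotates_blocks_alpha[OF assms(1)] r assms(1) by simp
next
  case (eng h1 h2)
  have "rotates_blocks l (h1 \<circ> h2)" using eng assms(1) by (intro rotates_blocks_comp) simp_all
  then show ?case by (simp only: sym_group_mult)
qed

text \<open>G_n is transitive: the point 1 can be moved to any q + 1 with q < l^r, r \<le> n, by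
  fixing the lower r - 1 digits inductively and then the r-th digit with a power of alpha.\<close>
lemma Gn_transitive:
  assumes "l \<ge> 2"
  shows "r \<le> n \<Longrightarrow> q < l^r \<Longrightarrow> \<exists>g\<in>Gn l n. g 1 = q + 1"
proof (induct r arbitrary: q)
  case 0
  then show ?case using Gn_id by (intro bexI[of _ id]) auto
next
  case (Suc r)
  define a k where "a = q mod l^r" and "k = q div l^r"
  have a: "a < l^r" unfolding a_def using assms by simp
  have k: "k < l" unfolding k_def using Suc.prems(2)
    by (simp add: less_mult_imp_div_less mult.commute)
  obtain g where g: "g \<in> Gn l n" "g 1 = a + 1" using Suc a by auto
  have "(alpha l (Suc r) ^^ k) (a + 0 * l^r + 1) = q + 1"
    using alpha_pow_digit[OF assms, of a "Suc r" 0 k] a k unfolding a_def k_def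
    by (simp add: mod_div_mult_eq)
  then have "(alpha l (Suc r) ^^ k \<circ> g) 1 = q + 1" using g by simp
  moreover have "alpha l (Suc r) ^^ k \<circ> g \<in> Gn l n"
    using Gn_comp[OF assms Gn_alpha_pow[OF assms] g(1)] Suc.prems(1) by simp
  ultimately show ?case by blast
qed

section \<open>l-cycles rotating blocks are powers of beta\<close>

lemma block_moved_iff:
  fixes g :: "nat \<Rightarrow> nat"
  assumes "\<forall>e<l. g (b*l + e + 1) = b'*l + (e + t) mod l + 1" "d < l"
  shows "g (b*l + d + 1) \<noteq> b*l + d + 1 \<longleftrightarrow> \<not> (b' = b \<and> t mod l = 0)"
proof -
  have "(d + t) mod l < l" using assms(2) by simp
  then have "b'*l + (d + t) mod l + 1 = b*l + d + 1 \<longleftrightarrow> b' = b \<and> (d + t) mod l = d"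
    using assms(2) by (rule block_point_eq)
  then show ?thesis using assms(1) assms(2) mod_shift_eq_iff[OF assms(2)] by simp
qed

text \<open>Its support contains a point x of some block b; since x moves, so does every point of
  block b, hence the support equals that block and the cycle acts on it as a shift.\<close>
lemma lcycle_rotating_blocks:
  assumes l: "l \<ge> 2" and perm: "\<sigma> permutes {1..l * M}" and rot: "rotates_blocks l \<sigma>"
    and cs: "distinct cs" "length cs = l" "\<sigma> = cycle_of_list cs"
  shows "\<exists>b<M. \<exists>t. \<sigma> = beta l (b + 1) ^^ t"
proof -
  have supp: "y \<in> set cs \<longleftrightarrow> \<sigma> y \<noteq> y" for y
  proof
    assume "y \<in> set cs"
    then show "\<sigma> y \<noteq> y" using cycle_of_list_moves[OF cs(1)] cs(2,3) l by simp
  next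
    assume "\<sigma> y \<noteq> y"
    then show "y \<in> set cs" using id_outside_supp[of y cs] cs(3) by blast
  qed
  obtain x where x: "x \<in> set cs" using cs(2) l by (cases cs) auto
  then have "\<sigma> x \<noteq> x" using supp by simp
  have "x \<in> {1..l * M}"
  proof (rule ccontr)
    assume "x \<notin> {1..l * M}"
    then show False using permutes_not_in[OF perm] \<open>\<sigma> x \<noteq> x\<close> by simp
  qed
  then have x1: "1 \<le> x" "x - 1 < M * l" by (auto simp: mult.commute)
  define b d where "b = (x - 1) div l" and "d = (x - 1) mod l"
  have bd: "b < M" "d < l" "x = b*l + d + 1"
    using less_mult_imp_div_less[OF x1(2)] l x1(1) unfolding b_def d_def by simp_all
  obtain b' t where bt: "\<forall>e<l. \<sigma> (b*l + e + 1) = b'*l + (e + t) mod l + 1"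
    using rot unfolding rotates_blocks_def by blast
  have shift: "\<not> (b' = b \<and> t mod l = 0)"
    using block_moved_iff[OF bt bd(2)] supp x bd(3) by simp
  have "set (block l b) \<subseteq> set cs"
  proof
    fix y assume "y \<in> set (block l b)"
    then obtain e where e: "e < l" "y = b*l + e + 1" by (auto simp: in_block)
    then show "y \<in> set cs" using block_moved_iff[OF bt e(1)] shift supp by simp
  qed
  then have "set (block l b) = set cs"
    by (rule card_subset_eq[OF List.finite_set]) (simp add: card_block distinct_card[OF cs(1)] cs(2))
  then have block: "set cs = set (block l b)" by simp
  have "\<sigma> x \<in> set (block l b)" using x block cs(3) cycle_permutes[of cs]
    by (simp add: permutes_in_image)
  then obtain e where e: "e < l" "\<sigma> x = b*l + e + 1" by (auto simp: in_block)
  moreover have "\<sigma> x = b'*l + (d + t) mod l + 1" using bt bd by simp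
  moreover have "(d + t) mod l < l" using l by simp
  ultimately have "b' = b" using block_point_eq[of "(d + t) mod l" l e b' b] by simp
  have "\<sigma> y = (beta l (b + 1) ^^ t) y" for y
  proof (cases "y \<in> set (block l b)")
    case True
    then obtain e where e: "e < l" "y = b*l + e + 1" by (auto simp: in_block)
    then show ?thesis using bt \<open>b' = b\<close> beta_pow_block[OF e(1), where b=b and j=t] by simp
  next
    case False
    then show ?thesis using supp block beta_pow_outside[OF False] by simp
  qed
  then show ?thesis using bd(1) by blast
qed

lemma Gn_lcycle:
  assumes "l \<ge> 2" "n \<ge> 1" "\<sigma> \<in> Gn l n" "is_cycle_of_length l \<sigma>"
  shows "\<exists>i\<in>{1..l^(n-1)}. \<exists>j. \<sigma> = beta l i ^^ j"
proof -
  obtain cs where cs: "distinct cs" "length cs = l" "\<sigma> = cycle_of_list cs"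
    using assms(4) unfolding is_cycle_of_length_def by blast
  have "\<sigma> permutes {1..l * l^(n-1)}"
    using Gn_permutes[OF assms(1,3)] pow_pred_split[OF assms(2)] by simp
  then obtain b j where "b < l^(n-1)" "\<sigma> = beta l (b + 1) ^^ j"
    using lcycle_rotating_blocks[OF assms(1) _ Gn_rotates_blocks[OF assms(1,3)] cs] by blast
  then show ?thesis by (intro bexI[of _ "b + 1"]) auto
qed

section \<open>The conjugacy class of beta l 1\<close>

lemma conj_beta1:
  assumes "l \<ge> 2" "bij g" "rotates_blocks l g"
  shows "g \<circ> beta l 1 \<circ> Hilbert_Choice.inv g = beta l ((g 1 - 1) div l + 1)"
proof -
  obtain b' t where bt: "\<forall>d<l. g (0*l + d + 1) = b'*l + (d + t) mod l + 1"
    using assms(3) unfolding rotates_blocks_def by blast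
  have "g 1 = b'*l + t mod l + 1" using bt[rule_format, of 0] assms(1) by simp
  then have b': "(g 1 - 1) div l = b'" using assms(1) by simp
  have "map g (block l 0) = rotate t (block l b')"
  proof (rule nth_equalityI)
    fix i assume "i < length (map g (block l 0))"
    then have i: "i < l" by simp
    then have "map g (block l 0) ! i = b'*l + (t + i) mod l + 1"
      using bt block_nth[OF i] by (simp add: add.commute)
    also have "\<dots> = rotate t (block l b') ! i"
      using i by (simp add: nth_rotate block_nth)
    finally show "map g (block l 0) ! i = rotate t (block l b') ! i" .
  qed simp
  then have "g \<circ> beta l 1 \<circ> Hilbert_Choice.inv g = cycle_of_list (rotate t (block l b'))"
    using conjugation_of_cycle[OF distinct_block assms(2)] beta_block[of l 0] by simp
  also have "\<dots> = cycle_of_list (block l b')"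
    by (rule cycle_of_list_rotate_independent[OF distinct_block, symmetric])
  also have "\<dots> = beta l (b' + 1)" by (rule beta_block[symmetric])
  finally show ?thesis using b' by simp
qed

text \<open>Statement (2): the conjugates g alpha_1 g^-1, g in G_n, are exactly the betas, using
  transitivity of G_n for the reverse inclusion.\<close>
lemma Gn_conj_class_alpha_1:
  assumes "l \<ge> 2" "n \<ge> 1"
  shows "conj_class_in (sym_group (l^n)) (Gn l n) (alpha l 1) = beta l ` {1..l^(n-1)}"
proof -
  have N: "l^n = l * l^(n-1)" using pow_pred_split[OF assms(2)] .
  have conj: "g \<otimes>\<^bsub>sym_group (l^n)\<^esub> alpha l 1 \<otimes>\<^bsub>sym_group (l^n)\<^esub> inv\<^bsub>sym_group (l^n)\<^esub> g
      = beta l ((g 1 - 1) div l + 1)" if g: "g \<in> Gn l n" for g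
  proof -
    have perm: "g permutes {1..l^n}" using Gn_permutes[OF assms(1) g] .
    then have "g \<circ> beta l 1 \<circ> Hilbert_Choice.inv g = beta l ((g 1 - 1) div l + 1)"
      by (intro conj_beta1[OF assms(1) _ Gn_rotates_blocks[OF assms(1) g]] permutes_bij)
    then show ?thesis using perm unfolding alpha_1 by (simp add: sym_group_mult sym_group_carrier)
  qed
  have index: "(g 1 - 1) div l + 1 \<in> {1..l^(n-1)}" if g: "g \<in> Gn l n" for g
  proof -
    have "(1::nat) \<in> {1..l^n}" using assms(1) by simp
    then have "g 1 \<in> {1..l^n}" using permutes_in_image[OF Gn_permutes[OF assms(1) g]] by blast
    then have "g 1 - 1 < l^(n-1) * l" using N by (auto simp: Suc_le_eq mult.commute)
    then have "(g 1 - 1) div l < l^(n-1)" by (rule less_mult_imp_div_less)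
    then show ?thesis by simp
  qed
  have onto: "\<exists>g\<in>Gn l n. (g 1 - 1) div l + 1 = i" if i: "i \<in> {1..l^(n-1)}" for i
  proof -
    have "i - 1 < l^(n-1)" using i by auto
    then have "(i - 1) * l < l^n" using N assms(1) by (simp add: mult.commute)
    then obtain g where g: "g \<in> Gn l n" "g 1 = (i - 1) * l + 1"
      using Gn_transitive[OF assms(1) order_refl] by blast
    have "(g 1 - 1) div l + 1 = i" using g(2) i assms(1) by simp
    then show ?thesis using g(1) by blast
  qed
  show ?thesis
  proof (intro equalityI subsetI)
    fix y assume "y \<in> conj_class_in (sym_group (l^n)) (Gn l n) (alpha l 1)"
    then obtain g where g: "g \<in> Gn l n"
      "y = g \<otimes>\<^bsub>sym_group (l^n)\<^esub> alpha l 1 \<otimes>\<^bsub>sym_group (l^n)\<^esub> inv\<^bsub>sym_group (l^n)\<^esub> g"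
      unfolding conj_class_in_def by blast
    then show "y \<in> beta l ` {1..l^(n-1)}" using conj[OF g(1)] index[OF g(1)] by blast
  next
    fix y assume "y \<in> beta l ` {1..l^(n-1)}"
    then obtain i where i: "i \<in> {1..l^(n-1)}" "y = beta l i" by blast
    then obtain g where g: "g \<in> Gn l n" "(g 1 - 1) div l + 1 = i" using onto by blast
    then have "y = g \<otimes>\<^bsub>sym_group (l^n)\<^esub> alpha l 1 \<otimes>\<^bsub>sym_group (l^n)\<^esub> inv\<^bsub>sym_group (l^n)\<^esub> g"
      using conj[OF g(1)] i(2) by simp
    then show "y \<in> conj_class_in (sym_group (l^n)) (Gn l n) (alpha l 1)"
      unfolding conj_class_in_def using g(1) by blast
  qed
qed

theorem mainTheorem16:
  fixes l n :: nat
  assumes "prime l" and "n \<ge> 2"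
  shows "(\<forall>\<sigma>\<in>Gn l n. is_cycle_of_length l \<sigma> \<longrightarrow>
            (\<exists>i\<in>{1..l^(n-1)}. \<exists>j::nat. \<sigma> = beta l i [^]\<^bsub>sym_group (l^n)\<^esub> j))
       \<and> alpha l 1 = beta l 1
       \<and> conj_class_in (sym_group (l^n)) (Gn l n) (alpha l 1) = beta l ` {1..l^(n-1)}
       \<and> card (conj_class_in (sym_group (l^n)) (Gn l n) (alpha l 1)) = l^(n-1)"
proof -
  have l: "l \<ge> 2" using prime_ge_2_nat assms(1) by blast
  have n: "n \<ge> 1" using assms(2) by simp
  have "inj_on (beta l) {1..l^(n-1)}" using beta_inj[OF l] by (rule inj_on_subset) auto
  then have "card (beta l ` {1..l^(n-1)}) = l^(n-1)" by (simp add: card_image)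
  then show ?thesis
    using Gn_lcycle[OF l n] alpha_1 Gn_conj_class_alpha_1[OF l n] by (simp add: sym_group_pow)
qed

end
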